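(* Let $\mathbf{2}=\{1,2\}$ with preorder $1\le2$. The structure $\mathcal{X}_{\mathcal{D}(\mathrm{Mem})}=(X,\sqsubseteq,\oplus_1,E_1,\oplus_2,E_2)$ with $\oplus_1=\otimes$, $\oplus_2=\oplus$ and $E_1=E_2=X$ is a $\mathbf{2}$-BI frame.
   Context: Fix a set $\mathrm{Var}$ of variables; values are real numbers. For finite $S\subseteq\mathrm{Var}$, $\mathrm{Mem}[S]$ is the set of maps $S\to\mathbb{R}$, ordered pointwise; $p_A(m)$ is restriction. $\mathcal{D}(Y)$ denotes countably supported probability distributions on $Y$; for $\mu\in\mathcal{D}(\mathrm{Mem}[S])$, $\mathrm{dom}(\mu)=S$ and $\pi_A\mu$ is the marginal on $A$. $X=\bigcup_{S\text{ finite}}\mathcal{D}(\mathrm{Mem}[S])$; $\mu\sqsubseteq\mu'$ iff $\mathrm{dom}(\mu)\subseteq\mathrm{dom}(\mu')$ and $\pi_{\mathrm{dom}(\mu)}\mu'=\mu$. $\mu_1\otimes\mu_2$ is $\emptyset$ if the domains $S,T$ intersect, and otherwise the singleton of $\mu\in\mathcal{D}(\mathrm{Mem}[S\cup T])$ with $\mu(x)=\mu_1(p_Sx)\mu_2(p_Tx)$. A partition is a set of pairwise disjoint nonempty sets; $\mathcal{T}$ coarsens $\mathcal{S}$ if $\bigcup\mathcal{T}=\bigcup\mathcal{S}$ and each element of $\mathcal{T}$ is a union of a subfamily of $\mathcal{S}$. $\mu$ is $\mathcal{S}$-PNA (for a partition $\mathcal{S}$ with $\bigcup\mathcal{S}\subseteq\mathrm{dom}(\mu)$)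 if for every $\mathcal{T}$ coarsening $\mathcal{S}$ and every family $(f_A:\mathrm{Mem}[A]\to[0,\infty))_{A\in\mathcal{T}}$ all non-decreasing or all non-increasing, $\mathbb{E}_{m\sim\mu}[\prod_Af_A(p_Am)]\le\prod_A\mathbb{E}_{m\sim\mu}[f_A(p_Am)]$. $\mu_1\oplus\mu_2$ is empty if the domains $S,T$ intersect, and otherwise the set of $\mu\in\mathcal{D}(\mathrm{Mem}[S\cup T])$ with $\pi_S\mu=\mu_1$, $\pi_T\mu=\mu_2$ that are $(\mathcal{S}\cup\mathcal{T})$-PNA for all partitions $\mathcal{S}$ of a subset of $S$ and $\mathcal{T}$ of a subset of $T$ with $\mu_1$ $\mathcal{S}$-PNA and $\mu_2$ $\mathcal{T}$-PNA. A (down-closed) BI frame $(X,\sqsubseteq,\oplus,E)$ requires: (Down-Closed) $z\in x\oplus y$, $x'\sqsubseteq x$, $y'\sqsubseteq y$ imply some $z'\sqsubseteq z$ with $z'\in x'\oplus y'$; (Commutativity) $z\in x\oplus y\Rightarrow z\in y\oplus x$; (Associativity) $w\in t\oplus z$, $t\in x\oplus y$ imply some $s\in y\oplus z$ with $w\in x\oplus s$; (Unit Existence) each $x$ has $e\in E$ with $x\in e\oplus x$; (Unit Coherence) $e\in E$, $x\in y\oplus e\Rightarrow y\sqsubseteq x$; (Unit Closure) $e\in E$, $e\sqsubseteq e'\Rightarrow e'\in E$. For a preorder $(M,\le)$, an $M$-BI frame is $(X,\sqsubseteq,(\oplus_m),(E_m))$ with each component a BI frame and $m_1\le m_2\Rightarrow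 x\oplus_{m_1}y\subseteq x\oplus_{m_2}y$. *)

theory Defs
  imports "HOL-Probability.Probability_Mass_Function"
begin

definition Mem :: "'v set \<Rightarrow> ('v \<rightharpoonup> real) set" where
  "Mem S = {m. dom m = S}"

definition mem_le :: "'v set \<Rightarrow> ('v \<rightharpoonup> real) \<Rightarrow> ('v \<rightharpoonup> real) \<Rightarrow> bool" where
  "mem_le A m m' = (\<forall>x\<in>A. the (m x) \<le> the (m' x))"

text \<open>D(Mem[S]): countably supported distributions (pmfs always have countable support).\<close>
definition Dist :: "'v set \<Rightarrow> ('v \<rightharpoonup> real) pmf set" where
  "Dist S = {\<mu>. set_pmf \<mu> \<subseteq> Mem S}"

definition Xcar :: "('v \<rightharpoonup> real) pmf set" where
  "Xcar = {\<mu>. \<exists>S. finite S \<and> \<mu> \<in> Dist S}"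

definition ddom :: "('v \<rightharpoonup> real) pmf \<Rightarrow> 'v set" where
  "ddom \<mu> = (THE S. \<mu> \<in> Dist S)"

definition marg :: "'v set \<Rightarrow> ('v \<rightharpoonup> real) pmf \<Rightarrow> ('v \<rightharpoonup> real) pmf" where
  "marg A \<mu> = map_pmf (\<lambda>m. m |` A) \<mu>"

definition dle :: "('v \<rightharpoonup> real) pmf \<Rightarrow> ('v \<rightharpoonup> real) pmf \<Rightarrow> bool" where
  "dle \<mu> \<mu>' = (ddom \<mu> \<subseteq> ddom \<mu>' \<and> marg (ddom \<mu>) \<mu>' = \<mu>)"

definition tensor :: "('v \<rightharpoonup> real) pmf \<Rightarrow> ('v \<rightharpoonup> real) pmf \<Rightarrow> ('v \<rightharpoonup> real) pmf set" where
  "tensor \<mu>1 \<mu>2 = (if ddom \<mu>1 \<inter> ddom \<mu>2 \<noteq> {} then {} else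
     {\<mu> \<in> Dist (ddom \<mu>1 \<union> ddom \<mu>2).
        \<forall>x\<in>Mem (ddom \<mu>1 \<union> ddom \<mu>2).
          pmf \<mu> x = pmf \<mu>1 (x |` ddom \<mu>1) * pmf \<mu>2 (x |` ddom \<mu>2)})"

definition is_partition :: "'v set set \<Rightarrow> bool" where
  "is_partition P = ((\<forall>A\<in>P. A \<noteq> {}) \<and> (\<forall>A\<in>P. \<forall>B\<in>P. A \<noteq> B \<longrightarrow> A \<inter> B = {}))"

definition coarsens :: "'v set set \<Rightarrow> 'v set set \<Rightarrow> bool" where
  "coarsens T S = (\<Union>T = \<Union>S \<and> (\<forall>A\<in>T. \<exists>F\<subseteq>S. A = \<Union>F))"

definition nondecr_on_Mem :: "'v set \<Rightarrow> (('v \<rightharpoonup> real) \<Rightarrow> real) \<Rightarrow> bool" where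
  "nondecr_on_Mem A f = (\<forall>m\<in>Mem A. \<forall>m'\<in>Mem A. mem_le A m m' \<longrightarrow> f m \<le> f m')"

definition nonincr_on_Mem :: "'v set \<Rightarrow> (('v \<rightharpoonup> real) \<Rightarrow> real) \<Rightarrow> bool" where
  "nonincr_on_Mem A f = (\<forall>m\<in>Mem A. \<forall>m'\<in>Mem A. mem_le A m m' \<longrightarrow> f m' \<le> f m)"

definition PNA :: "'v set set \<Rightarrow> ('v \<rightharpoonup> real) pmf \<Rightarrow> bool" where
  "PNA S \<mu> = (is_partition S \<and> \<Union>S \<subseteq> ddom \<mu> \<and>
     (\<forall>T f. is_partition T \<and> coarsens T S \<and>
        (\<forall>A\<in>T. \<forall>m\<in>Mem A. 0 \<le> f A m) \<and>
        ((\<forall>A\<in>T. nondecr_on_Mem A (f A)) \<or> (\<forall>A\<in>T. nonincr_on_Mem A (f A))) \<longrightarrow>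
        (\<integral>\<^sup>+ m. (\<Prod>A\<in>T. ennreal (f A (m |` A))) \<partial>measure_pmf \<mu>)
          \<le> (\<Prod>A\<in>T. \<integral>\<^sup>+ m. ennreal (f A (m |` A)) \<partial>measure_pmf \<mu>)))"

definition noplus :: "('v \<rightharpoonup> real) pmf \<Rightarrow> ('v \<rightharpoonup> real) pmf \<Rightarrow> ('v \<rightharpoonup> real) pmf set" where
  "noplus \<mu>1 \<mu>2 = (if ddom \<mu>1 \<inter> ddom \<mu>2 \<noteq> {} then {} else
     {\<mu> \<in> Dist (ddom \<mu>1 \<union> ddom \<mu>2).
        marg (ddom \<mu>1) \<mu> = \<mu>1 \<and> marg (ddom \<mu>2) \<mu> = \<mu>2 \<and>
        (\<forall>P Q. is_partition P \<and> \<Union>P \<subseteq> ddom \<mu>1 \<and> is_partition Q \<and> \<Union>Q \<subseteq> ddom \<mu>2 \<and>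
               PNA P \<mu>1 \<and> PNA Q \<mu>2 \<longrightarrow> PNA (P \<union> Q) \<mu>)})"

definition BI_frame :: "'a set \<Rightarrow> ('a \<Rightarrow> 'a \<Rightarrow> bool) \<Rightarrow> ('a \<Rightarrow> 'a \<Rightarrow> 'a set) \<Rightarrow> 'a set \<Rightarrow> bool" where
  "BI_frame X le op E = (
     (\<forall>x\<in>X. le x x) \<and>
     (\<forall>x\<in>X. \<forall>y\<in>X. \<forall>z\<in>X. le x y \<longrightarrow> le y z \<longrightarrow> le x z) \<and>
     (\<forall>x\<in>X. \<forall>y\<in>X. op x y \<subseteq> X) \<and> E \<subseteq> X \<and>
     (\<forall>x\<in>X. \<forall>y\<in>X. \<forall>z\<in>X. \<forall>x'\<in>X. \<forall>y'\<in>X.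
        z \<in> op x y \<longrightarrow> le x' x \<longrightarrow> le y' y \<longrightarrow> (\<exists>z'\<in>X. le z' z \<and> z' \<in> op x' y')) \<and>
     (\<forall>x\<in>X. \<forall>y\<in>X. \<forall>z\<in>X. z \<in> op x y \<longrightarrow> z \<in> op y x) \<and>
     (\<forall>x\<in>X. \<forall>y\<in>X. \<forall>z\<in>X. \<forall>t\<in>X. \<forall>w\<in>X.
        w \<in> op t z \<longrightarrow> t \<in> op x y \<longrightarrow> (\<exists>s\<in>X. s \<in> op y z \<and> w \<in> op x s)) \<and>
     (\<forall>x\<in>X. \<exists>e\<in>E. x \<in> op e x) \<and>
     (\<forall>e\<in>E. \<forall>x\<in>X. \<forall>y\<in>X. x \<in> op y e \<longrightarrow> le y x) \<and>
     (\<forall>e\<in>E. \<forall>e'\<in>X. le e e' \<longrightarrow> e' \<in> E))"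

definition M_BI_frame :: "'m set \<Rightarrow> ('m \<Rightarrow> 'm \<Rightarrow> bool) \<Rightarrow> 'a set \<Rightarrow> ('a \<Rightarrow> 'a \<Rightarrow> bool)
    \<Rightarrow> ('m \<Rightarrow> 'a \<Rightarrow> 'a \<Rightarrow> 'a set) \<Rightarrow> ('m \<Rightarrow> 'a set) \<Rightarrow> bool" where
  "M_BI_frame M leM X le op E = (
     (\<forall>m\<in>M. BI_frame X le (op m) (E m)) \<and>
     (\<forall>m1\<in>M. \<forall>m2\<in>M. leM m1 m2 \<longrightarrow> (\<forall>x\<in>X. \<forall>y\<in>X. op m1 x y \<subseteq> op m2 x y)))"

end

(* The separating product \<otimes> of two distributions on disjoint variable sets is their independent
   product, so its frame laws reduce to associativity of map_add, to the marginals of product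
   distributions, and to the point mass on the empty memory as unit.

   For \<oplus> everything rests on closure properties of partition negative association (PNA): it is
   invariant under marginalisation and coarsening, it passes to the trace of a partition on a set
   of variables, and it holds for the independent product of PNA distributions.  The last is a
   Fubini argument: the PNA inequality of the second factor is applied to the sections of the
   test functions, and that of the first factor to the resulting integrals, which are monotone
   but possibly infinite and hence truncated.  Associativity of \<oplus> cuts a PNA partition of the
   marginal on the variables of y and z into its traces on either side.  Since independent
   products are PNA, \<otimes> is contained in \<oplus>. *)

theory Submission
  imports Defs
begin

section \<open>Distributions on memories\<close>

lemma Dist_D: "\<mu> \<in> Dist S \<Longrightarrow> m \<in> set_pmf \<mu> \<Longrightarrow> dom m = S"
  by (auto simp: Dist_def Mem_def)

lemma ddom_Dist:
  assumes "\<mu> \<in> Dist S"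
  shows "ddom \<mu> = S"
proof -
  obtain m where "m \<in> set_pmf \<mu>" using set_pmf_not_empty[of \<mu>] by blast
  then have "\<And>S'. \<mu> \<in> Dist S' \<Longrightarrow> S' = S" using assms by (auto dest: Dist_D)
  then show ?thesis unfolding ddom_def using assms by (rule the_equality[rotated])
qed

lemma Xcar_iff: "\<mu> \<in> Xcar \<longleftrightarrow> finite (ddom \<mu>) \<and> \<mu> \<in> Dist (ddom \<mu>)"
  unfolding Xcar_def using ddom_Dist by blast

lemma Xcar_Dist: "\<mu> \<in> Xcar \<Longrightarrow> \<mu> \<in> Dist (ddom \<mu>)"
  by (simp add: Xcar_iff)

lemma finite_ddom: "\<mu> \<in> Xcar \<Longrightarrow> finite (ddom \<mu>)"
  by (simp add: Xcar_iff)

lemma XcarI: "\<mu> \<in> Dist S \<Longrightarrow> finite S \<Longrightarrow> \<mu> \<in> Xcar"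
  unfolding Xcar_def by blast

lemma restrict_map_dom_subset: "dom m \<subseteq> A \<Longrightarrow> m |` A = m"
  by (rule ext) (metis domIff restrict_map_def subsetD)

lemma marg_Dist:
  assumes "\<mu> \<in> Dist S"
  shows "marg A \<mu> \<in> Dist (S \<inter> A)"
proof -
  have "\<forall>m\<in>set_pmf \<mu>. dom (m |` A) = S \<inter> A" using Dist_D[OF assms] by simp
  then show ?thesis
    unfolding Dist_def Mem_def marg_def by (simp only: mem_Collect_eq set_map_pmf image_subset_iff)
qed

lemma marg_marg: "marg A (marg B \<mu>) = marg (B \<inter> A) \<mu>"
  by (simp add: marg_def map_pmf_comp)

lemma marg_marg_subset: "A \<subseteq> B \<Longrightarrow> marg A (marg B \<mu>) = marg A \<mu>"
  by (simp add: marg_marg Int_absorb1)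

lemma marg_superset: "\<mu> \<in> Dist S \<Longrightarrow> S \<subseteq> A \<Longrightarrow> marg A \<mu> = \<mu>"
  unfolding marg_def
  by (rule map_pmf_idI) (auto dest: Dist_D intro: restrict_map_dom_subset)

lemma marg_empty: "marg {} \<mu> = return_pmf Map.empty"
  by (simp add: marg_def)

lemma marg_Xcar:
  assumes "\<mu> \<in> Xcar"
  shows "marg A \<mu> \<in> Xcar"
  using marg_Dist[OF Xcar_Dist[OF assms]] by (rule XcarI) (simp add: finite_ddom[OF assms])

lemma ddom_marg: "\<mu> \<in> Xcar \<Longrightarrow> ddom (marg A \<mu>) = ddom \<mu> \<inter> A"
  using marg_Dist[OF Xcar_Dist] by (rule ddom_Dist)

lemma nn_integral_marg: "(\<integral>\<^sup>+ m. F m \<partial>marg D \<mu>) = (\<integral>\<^sup>+ m. F (m |` D) \<partial>\<mu>)"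
  by (simp add: marg_def)

lemma dle_refl: "\<mu> \<in> Xcar \<Longrightarrow> dle \<mu> \<mu>"
  by (simp add: dle_def marg_superset[OF Xcar_Dist order_refl])

lemma dle_trans: "dle \<mu>1 \<mu>2 \<Longrightarrow> dle \<mu>2 \<mu>3 \<Longrightarrow> dle \<mu>1 \<mu>3"
  unfolding dle_def by (metis marg_marg inf.absorb_iff2 order_trans)

lemma dle_marg: "\<mu> \<in> Xcar \<Longrightarrow> A \<subseteq> ddom \<mu> \<Longrightarrow> dle (marg A \<mu>) \<mu>"
  unfolding dle_def by (simp add: ddom_marg Int_absorb1)

lemma Dist_return_empty: "return_pmf Map.empty \<in> Dist {}"
  by (simp add: Dist_def Mem_def)

lemma Xcar_return_empty: "return_pmf Map.empty \<in> Xcar"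
  using Dist_return_empty by (rule XcarI) simp

lemma ddom_return_empty: "ddom (return_pmf Map.empty) = {}"
  using Dist_return_empty by (rule ddom_Dist)

section \<open>Independent products\<close>

lemma map_add_restrict_left: "dom a \<inter> dom b = {} \<Longrightarrow> (a ++ b) |` dom a = a"
  by (rule ext) (auto simp: restrict_map_def map_add_def split: option.split)

lemma map_add_restrict_right: "(a ++ b) |` dom b = b"
  by (rule ext) (auto simp: restrict_map_def map_add_def split: option.split)

lemma map_add_restrict_split: "dom m \<subseteq> S \<union> T \<Longrightarrow> (m |` S) ++ (m |` T) = m"
  by (rule ext) (auto simp: restrict_map_def map_add_def split: option.split)

definition indep_prod :: "('v \<rightharpoonup> real) pmf \<Rightarrow> ('v \<rightharpoonup> real) pmf \<Rightarrow> ('v \<rightharpoonup> real) pmf" where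
  "indep_prod x y = map_pmf (\<lambda>(a, b). a ++ b) (pair_pmf x y)"

lemma indep_prod_Dist:
  assumes "x \<in> Dist S" "y \<in> Dist T"
  shows "indep_prod x y \<in> Dist (S \<union> T)"
proof -
  have "\<forall>p\<in>set_pmf (pair_pmf x y). dom ((\<lambda>(a, b). a ++ b) p) = S \<union> T"
    using Dist_D[OF assms(1)] Dist_D[OF assms(2)] by auto
  then show ?thesis
    unfolding Dist_def Mem_def indep_prod_def
    by (simp only: mem_Collect_eq set_map_pmf image_subset_iff)
qed

lemma indep_prod_Xcar:
  assumes "x \<in> Xcar" "y \<in> Xcar"
  shows "indep_prod x y \<in> Xcar"
  using indep_prod_Dist[OF Xcar_Dist Xcar_Dist, OF assms]
  by (rule XcarI) (simp add: finite_ddom assms)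

lemma ddom_indep_prod: "x \<in> Xcar \<Longrightarrow> y \<in> Xcar \<Longrightarrow> ddom (indep_prod x y) = ddom x \<union> ddom y"
  by (intro ddom_Dist indep_prod_Dist Xcar_Dist)

lemma nn_integral_indep_prod:
  "(\<integral>\<^sup>+ m. F m \<partial>indep_prod x y) = (\<integral>\<^sup>+ a. \<integral>\<^sup>+ b. F (a ++ b) \<partial>y \<partial>x)"
  by (simp add: indep_prod_def nn_integral_pair_pmf')

lemma pmf_indep_prod:
  assumes x: "x \<in> Dist S" and y: "y \<in> Dist T" and "S \<inter> T = {}" and z: "z \<in> Mem (S \<union> T)"
  shows "pmf (indep_prod x y) z = pmf x (z |` S) * pmf y (z |` T)"
proof -
  let ?f = "\<lambda>(a, b). a ++ b"
  have restrict: "a = (a ++ b) |` S \<and> b = (a ++ b) |` T" if "a \<in> set_pmf x" "b \<in> set_pmf y" for a b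
  proof -
    have "dom a = S" "dom b = T" using that Dist_D[OF x] Dist_D[OF y] by auto
    then show ?thesis
      using map_add_restrict_left[of a b] map_add_restrict_right[of a b] \<open>S \<inter> T = {}\<close> by simp
  qed
  have z_eq: "z |` S ++ z |` T = z"
    using z by (simp add: Mem_def map_add_restrict_split)
  show ?thesis
  proof (cases "(z |` S, z |` T) \<in> set_pmf (pair_pmf x y)")
    case True
    have "inj_on ?f (set_pmf (pair_pmf x y))"
      by (rule inj_onI) (clarsimp, metis restrict)
    from pmf_map_inj[OF this True] show ?thesis
      by (simp add: indep_prod_def z_eq pmf_pair)
  next
    case False
    have "z \<notin> ?f ` set_pmf (pair_pmf x y)"
    proof
      assume "z \<in> ?f ` set_pmf (pair_pmf x y)"
      then obtain a b where "a \<in> set_pmf x" "b \<in> set_pmf y" "z = a ++ b" by auto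
      then show False using False restrict[of a b] by simp
    qed
    then show ?thesis
      using False by (simp add: indep_prod_def pmf_map_outside pmf_pair set_pmf_iff)
  qed
qed

lemma indep_prod_return_empty_left: "indep_prod (return_pmf Map.empty) x = x"
  by (simp add: indep_prod_def pair_return_pmf1 map_pmf_comp)

lemma indep_prod_return_empty_right: "indep_prod x (return_pmf Map.empty) = x"
  by (simp add: indep_prod_def pair_return_pmf2 map_pmf_comp)

lemma indep_prod_assoc: "indep_prod (indep_prod x y) z = indep_prod x (indep_prod y z)"
  unfolding indep_prod_def pair_map_pmf1 pair_map_pmf2 pair_pair_pmf map_pmf_comp
  by (rule map_pmf_cong) (auto simp: split_beta)

lemma marg_indep_prod:
  assumes x: "x \<in> Dist S" and y: "y \<in> Dist T" and "S \<inter> T = {}" "S' \<subseteq> S" "T' \<subseteq> T"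
  shows "marg (S' \<union> T') (indep_prod x y) = indep_prod (marg S' x) (marg T' y)"
proof -
  have "(a ++ b) |` (S' \<union> T') = a |` S' ++ b |` T'"
    if "dom a = S" "dom b = T" for a b :: "'a \<rightharpoonup> real"
  proof (rule ext)
    fix v
    have "v \<in> S' \<Longrightarrow> b v = None" "v \<in> T' \<Longrightarrow> v \<in> dom b"
      using that assms(3-5) by blast+
    then show "((a ++ b) |` (S' \<union> T')) v = (a |` S' ++ b |` T') v"
      by (auto simp: restrict_map_def map_add_def split: option.split)
  qed
  then have "marg (S' \<union> T') (indep_prod x y)
      = map_pmf (\<lambda>(a, b). a ++ b) (map_pmf (\<lambda>(a, b). (a |` S', b |` T')) (pair_pmf x y))"
    unfolding marg_def indep_prod_def map_pmf_comp
    by (intro map_pmf_cong refl) (auto dest: Dist_D[OF x] Dist_D[OF y])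
  then show ?thesis by (simp add: map_pair indep_prod_def marg_def)
qed

lemma marg_indep_prod_left:
  assumes x: "x \<in> Dist S" and y: "y \<in> Dist T" and "S \<inter> T = {}"
  shows "marg S (indep_prod x y) = x"
proof -
  have "marg S (indep_prod x y) = indep_prod (marg S x) (marg {} y)"
    using marg_indep_prod[OF x y \<open>S \<inter> T = {}\<close> order_refl empty_subsetI] by simp
  then show ?thesis
    by (simp add: marg_superset[OF x order_refl] marg_empty indep_prod_return_empty_right)
qed

lemma marg_indep_prod_right:
  assumes x: "x \<in> Dist S" and y: "y \<in> Dist T" and "S \<inter> T = {}"
  shows "marg T (indep_prod x y) = y"
proof -
  have "marg T (indep_prod x y) = indep_prod (marg {} x) (marg T y)"
    using marg_indep_prod[OF x y \<open>S \<inter> T = {}\<close> empty_subsetI order_refl] by simp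
  then show ?thesis
    by (simp add: marg_superset[OF y order_refl] marg_empty indep_prod_return_empty_left)
qed

lemma tensor_eq:
  assumes x: "x \<in> Dist S" and y: "y \<in> Dist T" and disj: "S \<inter> T = {}"
  shows "tensor x y = {indep_prod x y}"
proof -
  have "\<mu> = indep_prod x y"
    if "\<mu> \<in> Dist (S \<union> T)" "\<forall>z\<in>Mem (S \<union> T). pmf \<mu> z = pmf x (z |` S) * pmf y (z |` T)" for \<mu>
  proof (rule pmf_eqI)
    fix z
    show "pmf \<mu> z = pmf (indep_prod x y) z"
    proof (cases "z \<in> Mem (S \<union> T)")
      case True
      then show ?thesis using that pmf_indep_prod[OF x y disj True] by simp
    next
      case False
      then have "z \<notin> set_pmf \<mu>" "z \<notin> set_pmf (indep_prod x y)"
        using that indep_prod_Dist[OF x y] by (auto simp: Dist_def)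
      then show ?thesis by (simp add: set_pmf_iff)
    qed
  qed
  moreover have "tensor x y = {\<mu> \<in> Dist (S \<union> T).
      \<forall>z\<in>Mem (S \<union> T). pmf \<mu> z = pmf x (z |` S) * pmf y (z |` T)}"
    unfolding tensor_def ddom_Dist[OF x] ddom_Dist[OF y] using disj by simp
  ultimately show ?thesis
    using indep_prod_Dist[OF x y] pmf_indep_prod[OF x y disj] by blast
qed

lemma tensor_iff:
  assumes "x \<in> Xcar" "y \<in> Xcar"
  shows "z \<in> tensor x y \<longleftrightarrow> ddom x \<inter> ddom y = {} \<and> z = indep_prod x y"
proof (cases "ddom x \<inter> ddom y = {}")
  case True
  then show ?thesis using tensor_eq[OF Xcar_Dist Xcar_Dist, OF assms True] by simp
next
  case False
  then show ?thesis by (simp add: tensor_def)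
qed

section \<open>Partitions\<close>

lemma partitionI:
  "(\<And>A. A \<in> P \<Longrightarrow> A \<noteq> {}) \<Longrightarrow> (\<And>A B v. A \<in> P \<Longrightarrow> B \<in> P \<Longrightarrow> v \<in> A \<Longrightarrow> v \<in> B \<Longrightarrow> A = B)
   \<Longrightarrow> is_partition P"
  unfolding is_partition_def by blast

lemma partitionD: "is_partition P \<Longrightarrow> A \<in> P \<Longrightarrow> B \<in> P \<Longrightarrow> v \<in> A \<Longrightarrow> v \<in> B \<Longrightarrow> A = B"
  unfolding is_partition_def by blast

lemma partition_nonempty: "is_partition P \<Longrightarrow> A \<in> P \<Longrightarrow> A \<noteq> {}"
  unfolding is_partition_def by blast

lemma partition_subset:
  assumes P: "is_partition P" and "R \<subseteq> P"
  shows "is_partition R"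
proof (rule partitionI)
  show "A \<noteq> {}" if "A \<in> R" for A
    using that \<open>R \<subseteq> P\<close> partition_nonempty[OF P] by blast
  show "A = B" if "A \<in> R" "B \<in> R" "v \<in> A" "v \<in> B" for A B v
    using that \<open>R \<subseteq> P\<close> partitionD[OF P] by blast
qed

lemma partition_Un:
  assumes P: "is_partition P" and Q: "is_partition Q" and disj: "\<Union>P \<inter> \<Union>Q = {}"
  shows "is_partition (P \<union> Q)"
proof (rule partitionI)
  show "A \<noteq> {}" if "A \<in> P \<union> Q" for A
    using that partition_nonempty[OF P] partition_nonempty[OF Q] by blast
  show "A = B" if "A \<in> P \<union> Q" "B \<in> P \<union> Q" "v \<in> A" "v \<in> B" for A B v
    using that partitionD[OF P] partitionD[OF Q] disj by blast
qed

lemma partition_Union_empty: "is_partition P \<Longrightarrow> \<Union>P = {} \<Longrightarrow> P = {}"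
  by (auto dest: partition_nonempty)

lemma finite_partition: "is_partition P \<Longrightarrow> finite (\<Union>P) \<Longrightarrow> finite P"
  by (rule finite_subset[of P "Pow (\<Union>P)"]) auto

lemma coarsensI: "\<Union>T = \<Union>S \<Longrightarrow> (\<And>A. A \<in> T \<Longrightarrow> \<exists>F\<subseteq>S. A = \<Union>F) \<Longrightarrow> coarsens T S"
  unfolding coarsens_def by blast

lemma coarsens_Union: "coarsens T S \<Longrightarrow> \<Union>T = \<Union>S"
  unfolding coarsens_def by blast

lemma coarsensD: "coarsens T S \<Longrightarrow> A \<in> T \<Longrightarrow> \<exists>F\<subseteq>S. A = \<Union>F"
  unfolding coarsens_def by blast

lemma coarsens_trans:
  assumes TS: "coarsens T S" and SR: "coarsens S R"
  shows "coarsens T R"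
proof (rule coarsensI)
  show "\<Union>T = \<Union>R" using coarsens_Union[OF TS] coarsens_Union[OF SR] by simp
next
  fix A assume "A \<in> T"
  then obtain G where G: "G \<subseteq> S" "A = \<Union>G" using coarsensD[OF TS] by blast
  define F where "F = {B\<in>R. B \<subseteq> A}"
  have "A \<subseteq> \<Union>F"
  proof
    fix v assume "v \<in> A"
    then obtain C where C: "C \<in> G" "v \<in> C" using G(2) by blast
    then obtain F' where F': "F' \<subseteq> R" "C = \<Union>F'" using coarsensD[OF SR] G(1) by blast
    then obtain B where "B \<in> F'" "v \<in> B" using C(2) by blast
    moreover have "B \<subseteq> A" using \<open>B \<in> F'\<close> F'(2) C(1) G(2) by blast
    ultimately show "v \<in> \<Union>F" using F'(1) by (auto simp: F_def)
  qed
  then have "A = \<Union>F" by (auto simp: F_def)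
  moreover have "F \<subseteq> R" by (simp add: F_def)
  ultimately show "\<exists>F\<subseteq>R. A = \<Union>F" by blast
qed

lemma partition_block_subset:
  "is_partition P \<Longrightarrow> F \<subseteq> P \<Longrightarrow> B \<in> P \<Longrightarrow> B \<inter> \<Union>F \<noteq> {} \<Longrightarrow> B \<subseteq> \<Union>F"
  unfolding is_partition_def by blast

lemma coarsens_completion:
  assumes P: "is_partition P" and T: "is_partition T" and blocks: "\<forall>A\<in>T. \<exists>F\<subseteq>P. A = \<Union>F"
  defines "R \<equiv> {B\<in>P. B \<inter> \<Union>T = {}}"
  shows "is_partition (T \<union> R)" "coarsens (T \<union> R) P"
proof -
  have "is_partition R" using partition_subset[OF P] by (simp add: R_def)
  then show "is_partition (T \<union> R)"
    by (rule partition_Un[OF T]) (auto simp: R_def)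
  have covered: "B \<subseteq> \<Union>T" if B: "B \<in> P" "B \<notin> R" for B
  proof -
    obtain A where "A \<in> T" "B \<inter> A \<noteq> {}" using B unfolding R_def by blast
    moreover obtain F where "F \<subseteq> P" "A = \<Union>F" using blocks \<open>A \<in> T\<close> by blast
    ultimately show ?thesis using partition_block_subset[OF P _ \<open>B \<in> P\<close>] by blast
  qed
  have in_P: "A \<subseteq> \<Union>P" if A: "A \<in> T" for A
  proof -
    obtain F where "F \<subseteq> P" "A = \<Union>F" using blocks A by blast
    then show ?thesis by blast
  qed
  have "\<Union>(T \<union> R) = \<Union>P"
  proof
    show "\<Union>(T \<union> R) \<subseteq> \<Union>P" using in_P by (auto simp: R_def)
    show "\<Union>P \<subseteq> \<Union>(T \<union> R)"
    proof
      fix v assume "v \<in> \<Union>P"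
      then obtain B where "B \<in> P" "v \<in> B" by blast
      then show "v \<in> \<Union>(T \<union> R)" using covered[of B] by (cases "B \<in> R") auto
    qed
  qed
  then show "coarsens (T \<union> R) P"
  proof (rule coarsensI)
    fix A assume "A \<in> T \<union> R"
    then show "\<exists>F\<subseteq>P. A = \<Union>F"
    proof
      assume "A \<in> T" then show ?thesis using blocks by blast
    next
      assume "A \<in> R" then show ?thesis by (intro exI[of _ "{A}"]) (auto simp: R_def)
    qed
  qed
qed

lemma coarsens_Int_blocks:
  assumes "coarsens T (P \<union> Q)" "\<Union>P \<subseteq> X" "\<Union>Q \<inter> X = {}" "A \<in> T"
  shows "\<exists>F\<subseteq>P. A \<inter> X = \<Union>F"
proof -
  obtain F where "F \<subseteq> P \<union> Q" "A = \<Union>F" using coarsensD assms(1,4) by blast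
  then have "A \<inter> X = \<Union>(F \<inter> P)" using assms(2,3) by blast
  then show ?thesis by blast
qed

definition restrict_blocks :: "'v set \<Rightarrow> 'v set set \<Rightarrow> 'v set set" where
  "restrict_blocks Y Q = (\<lambda>B. B \<inter> Y) ` {B\<in>Q. B \<inter> Y \<noteq> {}}"

lemma Union_restrict_blocks: "\<Union>(restrict_blocks Y Q) = \<Union>Q \<inter> Y"
  unfolding restrict_blocks_def by auto

lemma partition_restrict_blocks:
  assumes Q: "is_partition Q"
  shows "is_partition (restrict_blocks Y Q)"
proof (rule partitionI)
  show "A \<noteq> {}" if "A \<in> restrict_blocks Y Q" for A
    using that by (auto simp: restrict_blocks_def)
  show "A = B" if "A \<in> restrict_blocks Y Q" "B \<in> restrict_blocks Y Q" "v \<in> A" "v \<in> B" for A B v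
    using that partitionD[OF Q] by (auto simp: restrict_blocks_def)
qed

lemma coarsens_restrict_blocks:
  assumes "\<Union>Q \<subseteq> Y \<union> Z"
  shows "coarsens (P \<union> Q) (P \<union> restrict_blocks Y Q \<union> restrict_blocks Z Q)"
proof (rule coarsensI)
  show "\<Union>(P \<union> Q) = \<Union>(P \<union> restrict_blocks Y Q \<union> restrict_blocks Z Q)"
    using assms by (auto simp: Union_restrict_blocks)
next
  fix A assume "A \<in> P \<union> Q"
  then consider "A \<in> P" | "A \<in> Q" by blast
  then show "\<exists>F\<subseteq>P \<union> restrict_blocks Y Q \<union> restrict_blocks Z Q. A = \<Union>F"
  proof cases
    case 1
    then show ?thesis by (intro exI[of _ "{A}"]) auto
  next
    case 2
    define F where "F = {C \<in> {A \<inter> Y, A \<inter> Z}. C \<noteq> {}}"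
    have "A = \<Union>F" using assms 2 unfolding F_def by blast
    moreover have "F \<subseteq> restrict_blocks Y Q \<union> restrict_blocks Z Q"
      using 2 by (auto simp: F_def restrict_blocks_def)
    ultimately show ?thesis by blast
  qed
qed

section \<open>Partition negative association\<close>

definition mono_Mem :: "bool \<Rightarrow> 'v set \<Rightarrow> (('v \<rightharpoonup> real) \<Rightarrow> 'a::order) \<Rightarrow> bool" where
  "mono_Mem up A h \<longleftrightarrow> monotone_on (Mem A) (mem_le A) (if up then (\<le>) else (\<ge>)) h"

lemma nondecr_on_Mem_iff: "nondecr_on_Mem A f \<longleftrightarrow> mono_Mem True A f"
  by (simp add: nondecr_on_Mem_def mono_Mem_def monotone_on_def)

lemma nonincr_on_Mem_iff: "nonincr_on_Mem A f \<longleftrightarrow> mono_Mem False A f"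
  by (simp add: nonincr_on_Mem_def mono_Mem_def monotone_on_def)

lemma mono_MemI:
  "(\<And>m m'. m \<in> Mem A \<Longrightarrow> m' \<in> Mem A \<Longrightarrow> mem_le A m m' \<Longrightarrow> if up then h m \<le> h m' else h m' \<le> h m)
   \<Longrightarrow> mono_Mem up A h"
  by (cases up) (simp_all add: mono_Mem_def monotone_on_def)

lemma mono_MemD:
  "mono_Mem up A h \<Longrightarrow> m \<in> Mem A \<Longrightarrow> m' \<in> Mem A \<Longrightarrow> mem_le A m m'
   \<Longrightarrow> if up then h m \<le> h m' else h m' \<le> h m"
  by (cases up) (simp_all add: mono_Mem_def monotone_on_def)

lemma mono_Mem_const: "mono_Mem up A (\<lambda>_. c)"
  by (rule mono_MemI) simp

lemma mono_Mem_comp: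
  assumes "mono_Mem up B h"
    and "\<And>c. c \<in> Mem A \<Longrightarrow> \<phi> c \<in> Mem B"
    and "\<And>c c'. c \<in> Mem A \<Longrightarrow> c' \<in> Mem A \<Longrightarrow> mem_le A c c' \<Longrightarrow> mem_le B (\<phi> c) (\<phi> c')"
  shows "mono_Mem up A (\<lambda>c. h (\<phi> c))"
  by (intro mono_MemI mono_MemD[OF assms(1)] assms(2,3))

lemma mono_Mem_mono:
  assumes h: "mono_Mem up A h" and g: "mono g"
  shows "mono_Mem up A (\<lambda>c. g (h c))"
proof (rule mono_MemI)
  fix m m' assume "m \<in> Mem A" "m' \<in> Mem A" "mem_le A m m'"
  from mono_MemD[OF h this] show "if up then g (h m) \<le> g (h m') else g (h m') \<le> g (h m)"
    using monoD[OF g] by (cases up) simp_all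
qed

lemma nn_integral_const_pmf: "(\<integral>\<^sup>+ m. c \<partial>measure_pmf \<mu>) = c"
  by (simp add: nn_integral_const emeasure_pmf)

lemma nn_integral_mono_pmf:
  "(\<And>m. m \<in> set_pmf \<mu> \<Longrightarrow> F m \<le> G m) \<Longrightarrow> (\<integral>\<^sup>+ m. F m \<partial>measure_pmf \<mu>) \<le> (\<integral>\<^sup>+ m. G m \<partial>measure_pmf \<mu>)"
  by (rule nn_integral_mono_AE) (simp add: AE_pmfI)

lemma nn_integral_cong_pmf:
  "(\<And>m. m \<in> set_pmf \<mu> \<Longrightarrow> F m = G m) \<Longrightarrow> (\<integral>\<^sup>+ m. F m \<partial>measure_pmf \<mu>) = (\<integral>\<^sup>+ m. G m \<partial>measure_pmf \<mu>)"
  by (rule nn_integral_cong_AE) (simp add: AE_pmfI)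

lemma mono_Mem_nn_integral:
  assumes "\<And>b. b \<in> set_pmf \<nu> \<Longrightarrow> mono_Mem up A (\<lambda>c. H c b)"
  shows "mono_Mem up A (\<lambda>c. \<integral>\<^sup>+ b. H c b \<partial>measure_pmf \<nu>)"
proof (rule mono_MemI)
  fix m m' assume mm': "m \<in> Mem A" "m' \<in> Mem A" "mem_le A m m'"
  have "if up then H m b \<le> H m' b else H m' b \<le> H m b" if "b \<in> set_pmf \<nu>" for b
    using mono_MemD[OF assms[OF that] mm'] .
  then show "if up then (\<integral>\<^sup>+ b. H m b \<partial>\<nu>) \<le> (\<integral>\<^sup>+ b. H m' b \<partial>\<nu>)
             else (\<integral>\<^sup>+ b. H m' b \<partial>\<nu>) \<le> (\<integral>\<^sup>+ b. H m b \<partial>\<nu>)"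
    by (cases up) (simp_all add: nn_integral_mono_pmf)
qed

lemma Mem_restrict: "m \<in> Mem A \<Longrightarrow> C \<subseteq> A \<Longrightarrow> m |` C \<in> Mem C"
  unfolding Mem_def by auto

lemma mem_le_restrict: "mem_le A m m' \<Longrightarrow> C \<subseteq> A \<Longrightarrow> mem_le C (m |` C) (m' |` C)"
  unfolding mem_le_def by auto

lemma Mem_map_add_restrict: "c \<in> Mem (A \<inter> B) \<Longrightarrow> A \<subseteq> dom a \<union> B \<Longrightarrow> (a ++ c) |` A \<in> Mem A"
  unfolding Mem_def by auto

lemma mem_le_map_add_restrict:
  assumes "c \<in> Mem (A \<inter> B)" "c' \<in> Mem (A \<inter> B)" "mem_le (A \<inter> B) c c'"
  shows "mem_le A ((a ++ c) |` A) ((a ++ c') |` A)"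
  unfolding mem_le_def
proof
  fix v assume "v \<in> A"
  show "the (((a ++ c) |` A) v) \<le> the (((a ++ c') |` A) v)"
  proof (cases "v \<in> B")
    case True
    then have "v \<in> dom c" "v \<in> dom c'" using \<open>v \<in> A\<close> assms(1,2) by (auto simp: Mem_def)
    then obtain y y' where "c v = Some y" "c' v = Some y'" by (metis domD)
    moreover have "the (c v) \<le> the (c' v)" using assms(3) \<open>v \<in> A\<close> True by (simp add: mem_le_def)
    ultimately show ?thesis using \<open>v \<in> A\<close> by (simp add: map_add_def)
  next
    case False
    then have "c v = None" "c' v = None" using assms(1,2) by (auto simp: Mem_def)
    then show ?thesis using \<open>v \<in> A\<close> by (simp add: map_add_def)
  qed
qed

lemma restrict_map_add: "dom b \<subseteq> B \<Longrightarrow> (a ++ b) |` A = (a ++ b |` (A \<inter> B)) |` A"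
proof (rule ext)
  fix v assume "dom b \<subseteq> B"
  then have "v \<notin> B \<Longrightarrow> b v = None" by auto
  then show "((a ++ b) |` A) v = ((a ++ b |` (A \<inter> B)) |` A) v"
    by (auto simp: restrict_map_def map_add_def split: option.split)
qed

definition expect_prod_le :: "'a pmf \<Rightarrow> 'i set \<Rightarrow> ('i \<Rightarrow> 'a \<Rightarrow> ennreal) \<Rightarrow> bool" where
  "expect_prod_le \<mu> T F \<longleftrightarrow> (\<integral>\<^sup>+ m. (\<Prod>A\<in>T. F A m) \<partial>\<mu>) \<le> (\<Prod>A\<in>T. \<integral>\<^sup>+ m. F A m \<partial>\<mu>)"

lemma expect_prod_le_cong:
  assumes "expect_prod_le \<mu> T F" "\<And>A m. A \<in> T \<Longrightarrow> m \<in> set_pmf \<mu> \<Longrightarrow> F A m = G A m"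
  shows "expect_prod_le \<mu> T G"
proof -
  have "(\<integral>\<^sup>+ m. (\<Prod>A\<in>T. F A m) \<partial>\<mu>) = (\<integral>\<^sup>+ m. (\<Prod>A\<in>T. G A m) \<partial>\<mu>)"
    by (intro nn_integral_cong_pmf prod.cong refl assms(2))
  moreover have "(\<Prod>A\<in>T. \<integral>\<^sup>+ m. F A m \<partial>\<mu>) = (\<Prod>A\<in>T. \<integral>\<^sup>+ m. G A m \<partial>\<mu>)"
    by (intro prod.cong refl nn_integral_cong_pmf assms(2))
  ultimately show ?thesis using assms(1) by (simp add: expect_prod_le_def)
qed

lemma PNA_I:
  assumes "is_partition S" "\<Union>S \<subseteq> ddom \<mu>"
    and "\<And>T f up. is_partition T \<Longrightarrow> coarsens T S \<Longrightarrow> \<forall>A\<in>T. \<forall>m\<in>Mem A. 0 \<le> f A m \<Longrightarrow>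
           \<forall>A\<in>T. mono_Mem up A (f A) \<Longrightarrow> expect_prod_le \<mu> T (\<lambda>A m. ennreal (f A (m |` A)))"
  shows "PNA S \<mu>"
proof -
  have "(\<integral>\<^sup>+ m. (\<Prod>A\<in>T. ennreal (f A (m |` A))) \<partial>\<mu>) \<le> (\<Prod>A\<in>T. \<integral>\<^sup>+ m. ennreal (f A (m |` A)) \<partial>\<mu>)"
    if "is_partition T" "coarsens T S" "\<forall>A\<in>T. \<forall>m\<in>Mem A. 0 \<le> f A m"
      "(\<forall>A\<in>T. nondecr_on_Mem A (f A)) \<or> (\<forall>A\<in>T. nonincr_on_Mem A (f A))" for T f
    using that(4) assms(3)[OF that(1-3), unfolded expect_prod_le_def]
    unfolding nondecr_on_Mem_iff nonincr_on_Mem_iff by blast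
  then show ?thesis
    unfolding PNA_def using assms(1,2) by blast
qed

lemma PNA_D:
  assumes "PNA S \<mu>" "is_partition T" "coarsens T S" "\<forall>A\<in>T. \<forall>m\<in>Mem A. 0 \<le> f A m"
    "\<forall>A\<in>T. mono_Mem up A (f A)"
  shows "expect_prod_le \<mu> T (\<lambda>A m. ennreal (f A (m |` A)))"
proof -
  note ineq = assms(1)[unfolded PNA_def, THEN conjunct2, THEN conjunct2, rule_format]
  have "(\<forall>A\<in>T. nondecr_on_Mem A (f A)) \<or> (\<forall>A\<in>T. nonincr_on_Mem A (f A))"
    using assms(5) by (cases up) (simp_all add: nondecr_on_Mem_iff nonincr_on_Mem_iff)
  then show ?thesis
    unfolding expect_prod_le_def by (intro ineq conjI assms(2-4))
qed

lemma PNA_partition: "PNA S \<mu> \<Longrightarrow> is_partition S"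
  by (simp add: PNA_def)

lemma PNA_Union_subset: "PNA S \<mu> \<Longrightarrow> \<Union>S \<subseteq> ddom \<mu>"
  by (simp add: PNA_def)

lemma PNA_finite: "PNA S \<mu> \<Longrightarrow> \<mu> \<in> Xcar \<Longrightarrow> finite S"
  by (meson PNA_Union_subset PNA_partition finite_ddom finite_partition finite_subset)

lemma PNA_empty: "PNA {} \<mu>"
proof (rule PNA_I)
  fix T :: "'a set set" and f :: "'a set \<Rightarrow> ('a \<rightharpoonup> real) \<Rightarrow> real" and up
  assume "is_partition T" "coarsens T {}"
  then have "T = {}" using partition_Union_empty coarsens_Union by fastforce
  then show "expect_prod_le \<mu> T (\<lambda>A m. ennreal (f A (m |` A)))"
    by (simp add: expect_prod_le_def nn_integral_const_pmf)
qed (simp_all add: is_partition_def)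

lemma PNA_coarsen:
  assumes pna: "PNA S \<mu>" and "is_partition S'" "coarsens S' S"
  shows "PNA S' \<mu>"
proof (rule PNA_I)
  show "\<Union>S' \<subseteq> ddom \<mu>" using PNA_Union_subset[OF pna] coarsens_Union[OF assms(3)] by simp
  show "expect_prod_le \<mu> T (\<lambda>A m. ennreal (f A (m |` A)))"
    if "is_partition T" "coarsens T S'" "\<forall>A\<in>T. \<forall>m\<in>Mem A. 0 \<le> f A m" "\<forall>A\<in>T. mono_Mem up A (f A)"
    for T f up
    using PNA_D[OF pna that(1) coarsens_trans[OF that(2) assms(3)] that(3,4)] .
qed fact

lemma expect_prod_le_marg:
  assumes "\<And>A m. A \<in> T \<Longrightarrow> F A (m |` D) = F A m"
  shows "expect_prod_le (marg D \<mu>) T F \<longleftrightarrow> expect_prod_le \<mu> T F"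
  unfolding expect_prod_le_def nn_integral_marg by (simp add: assms)

lemma PNA_marg_iff:
  assumes \<mu>: "\<mu> \<in> Xcar" and "D \<subseteq> ddom \<mu>" "\<Union>P \<subseteq> D"
  shows "PNA P (marg D \<mu>) \<longleftrightarrow> PNA P \<mu>"
proof -
  have ddom: "ddom (marg D \<mu>) = D" using ddom_marg[OF \<mu>] assms(2) by blast
  have marg_eq: "expect_prod_le (marg D \<mu>) T (\<lambda>A m. ennreal (f A (m |` A)))
      \<longleftrightarrow> expect_prod_le \<mu> T (\<lambda>A m. ennreal (f A (m |` A)))"
    if "coarsens T P" for T and f :: "_ \<Rightarrow> _ \<Rightarrow> real"
  proof (rule expect_prod_le_marg)
    fix A m assume "A \<in> T"
    then have "D \<inter> A = A" using coarsens_Union[OF that] assms(3) by blast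
    then show "ennreal (f A (m |` D |` A)) = ennreal (f A (m |` A))" by simp
  qed
  show ?thesis
  proof
    assume pna: "PNA P (marg D \<mu>)"
    show "PNA P \<mu>"
      by (rule PNA_I) (use PNA_partition[OF pna] assms PNA_D[OF pna] marg_eq in auto)
  next
    assume pna: "PNA P \<mu>"
    show "PNA P (marg D \<mu>)"
      by (rule PNA_I) (use PNA_partition[OF pna] assms ddom PNA_D[OF pna] marg_eq in auto)
  qed
qed

lemma expect_prod_le_const_factors:
  assumes "finite T" "T1 \<subseteq> T" and const: "\<And>A m. A \<in> T - T1 \<Longrightarrow> F A m = F A e"
    and le: "expect_prod_le \<mu> T1 F"
  shows "expect_prod_le \<mu> T F"
proof -
  define K where "K = (\<Prod>A\<in>T - T1. F A e)"
  have split: "(\<Prod>A\<in>T. G A) = (\<Prod>A\<in>T1. G A) * (\<Prod>A\<in>T - T1. G A)" for G :: "_ \<Rightarrow> ennreal"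
    using prod.subset_diff[OF assms(2,1)] by (simp add: mult.commute)
  have "(\<Prod>A\<in>T - T1. F A m) = K" for m
    unfolding K_def by (rule prod.cong[OF refl]) (rule const)
  moreover have "(\<Prod>A\<in>T - T1. \<integral>\<^sup>+ m. F A m \<partial>\<mu>) = K"
  proof (unfold K_def, rule prod.cong[OF refl])
    fix A assume "A \<in> T - T1"
    then have "(\<integral>\<^sup>+ m. F A m \<partial>\<mu>) = (\<integral>\<^sup>+ m. F A e \<partial>\<mu>)"
      by (intro nn_integral_cong const)
    then show "(\<integral>\<^sup>+ m. F A m \<partial>\<mu>) = F A e" by (simp add: nn_integral_const_pmf)
  qed
  ultimately have "(\<integral>\<^sup>+ m. (\<Prod>A\<in>T. F A m) \<partial>\<mu>) = (\<integral>\<^sup>+ m. (\<Prod>A\<in>T1. F A m) \<partial>\<mu>) * K"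
    "(\<Prod>A\<in>T. \<integral>\<^sup>+ m. F A m \<partial>\<mu>) = (\<Prod>A\<in>T1. \<integral>\<^sup>+ m. F A m \<partial>\<mu>) * K"
    by (simp_all add: split nn_integral_multc)
  then show ?thesis
    using le mult_right_mono[of _ _ K] unfolding expect_prod_le_def by simp
qed

text \<open>The blocks of \<open>P\<close> not covered by \<open>T\<close> are added to \<open>T\<close> with the constant function 1.\<close>
lemma PNA_subfamily:
  assumes pna: "PNA P \<mu>" and "finite P" and T: "is_partition T" and blocks: "\<forall>A\<in>T. \<exists>F\<subseteq>P. A = \<Union>F"
    and nonneg: "\<forall>A\<in>T. \<forall>m\<in>Mem A. 0 \<le> f A m" and mono: "\<forall>A\<in>T. mono_Mem up A (f A)"
  shows "expect_prod_le \<mu> T (\<lambda>A m. ennreal (f A (m |` A)))"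
proof -
  define R where "R = {B\<in>P. B \<inter> \<Union>T = {}}"
  define g where "g A = (if A \<in> T then f A else (\<lambda>_. 1))" for A
  note completion = coarsens_completion[OF PNA_partition[OF pna] T blocks, folded R_def]
  have "finite T"
    by (rule finite_subset[of T "Union ` Pow P"]) (use blocks \<open>finite P\<close> in auto)
  moreover have "finite R" using \<open>finite P\<close> by (simp add: R_def)
  moreover have "T \<inter> R = {}" and notT: "\<And>A. A \<in> R \<Longrightarrow> A \<notin> T"
    using partition_nonempty[OF T] by (auto simp: R_def)
  ultimately have
    "(\<Prod>A\<in>T \<union> R. ennreal (g A (m |` A))) = (\<Prod>A\<in>T. ennreal (f A (m |` A)))"
    "(\<Prod>A\<in>T \<union> R. \<integral>\<^sup>+ m. ennreal (g A (m |` A)) \<partial>\<mu>) = (\<Prod>A\<in>T. \<integral>\<^sup>+ m. ennreal (f A (m |` A)) \<partial>\<mu>)"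
    for m by (simp_all add: prod.union_disjoint g_def notT nn_integral_const_pmf)
  moreover have "expect_prod_le \<mu> (T \<union> R) (\<lambda>A m. ennreal (g A (m |` A)))"
    by (rule PNA_D[OF pna completion, where up = up])
      (use nonneg mono in \<open>simp_all add: g_def mono_Mem_const\<close>)
  ultimately show ?thesis
    unfolding expect_prod_le_def by simp
qed

lemma PNA_family:
  assumes pna: "PNA P \<mu>" and "finite P" "finite T"
    and disj: "disjoint_family_on k T" and blocks: "\<forall>A\<in>T. \<exists>F\<subseteq>P. k A = \<Union>F"
    and nonneg: "\<forall>A\<in>T. \<forall>c\<in>Mem (k A). 0 \<le> g A c" and mono: "\<forall>A\<in>T. mono_Mem up (k A) (g A)"
  shows "expect_prod_le \<mu> T (\<lambda>A m. ennreal (g A (m |` k A)))"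
proof -
  define T1 where "T1 = {A\<in>T. k A \<noteq> {}}"
  have inj: "inj_on k T1"
    using disj by (auto simp: T1_def disjoint_family_on_def intro!: inj_onI)
  define f where "f C = g (inv_into T1 k C)" for C
  have f_k: "f (k A) = g A" if "A \<in> T1" for A
    using inv_into_f_f[OF inj that] by (simp add: f_def)
  have "is_partition (k ` T1)"
  proof (rule partitionI)
    show "C \<noteq> {}" if "C \<in> k ` T1" for C using that by (auto simp: T1_def)
    fix C C' v assume "C \<in> k ` T1" "C' \<in> k ` T1" "v \<in> C" "v \<in> C'"
    then obtain A A' where "A \<in> T" "A' \<in> T" "C = k A" "C' = k A'" "v \<in> k A \<inter> k A'"
      by (auto simp: T1_def)
    then show "C = C'" using disjoint_family_onD[OF disj] by (cases "A = A'") auto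
  qed
  then have "expect_prod_le \<mu> (k ` T1) (\<lambda>C m. ennreal (f C (m |` C)))"
    by (rule PNA_subfamily[OF pna \<open>finite P\<close>]) (use blocks nonneg mono in \<open>auto simp: T1_def f_k\<close>)
  then have T1: "expect_prod_le \<mu> T1 (\<lambda>A m. ennreal (g A (m |` k A)))"
    by (simp add: expect_prod_le_def prod.reindex[OF inj] f_k)
  show ?thesis
    by (rule expect_prod_le_const_factors[OF \<open>finite T\<close> _ _ T1, where e = Map.empty])
      (auto simp: T1_def)
qed

lemma SUP_mult_incseq_ennreal:
  fixes f g :: "nat \<Rightarrow> ennreal"
  assumes f: "incseq f" and g: "incseq g"
  shows "(SUP i. f i * g i) = (SUP i. f i) * (SUP i. g i)"
proof (rule antisym)
  show "(SUP i. f i * g i) \<le> (SUP i. f i) * (SUP i. g i)"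
    by (rule SUP_least) (intro mult_mono SUP_upper; simp)
  have "(SUP i. f i) * (SUP i. g i) = (SUP i. SUP j. f i * g j)"
    by (simp add: SUP_mult_left_ennreal SUP_mult_right_ennreal) (rule SUP_commute)
  also have "\<dots> \<le> (SUP i. f i * g i)"
  proof (intro SUP_least)
    fix i j
    have "f i * g j \<le> f (max i j) * g (max i j)"
      using f g by (intro mult_mono) (auto simp: incseq_def)
    also have "\<dots> \<le> (SUP i. f i * g i)" by (rule SUP_upper) simp
    finally show "f i * g j \<le> (SUP i. f i * g i)" .
  qed
  finally show "(SUP i. f i) * (SUP i. g i) \<le> (SUP i. f i * g i)" .
qed

lemma SUP_prod_incseq_ennreal:
  fixes u :: "nat \<Rightarrow> 'i \<Rightarrow> ennreal"
  assumes "finite T" "\<And>A. A \<in> T \<Longrightarrow> incseq (\<lambda>n. u n A)"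
  shows "(SUP n. \<Prod>A\<in>T. u n A) = (\<Prod>A\<in>T. SUP n. u n A)"
  using assms
proof (induction T rule: finite_induct)
  case (insert a T)
  have "incseq (\<lambda>n. \<Prod>A\<in>T. u n A)"
    using insert.prems by (auto simp: incseq_def intro!: prod_mono_ennreal)
  then have "(SUP n. u n a * (\<Prod>A\<in>T. u n A)) = (SUP n. u n a) * (SUP n. \<Prod>A\<in>T. u n A)"
    by (intro SUP_mult_incseq_ennreal insert.prems) simp
  then show ?case using insert by simp
qed simp

lemma SUP_min_of_nat: "(SUP n. min h (of_nat n)) = (h :: ennreal)"
proof (rule antisym)
  show "(SUP n. min h (of_nat n)) \<le> h" by (rule SUP_least) simp
  show "h \<le> (SUP n. min h (of_nat n))"
  proof (cases "h = top")
    case True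
    then show ?thesis by (simp add: ennreal_SUP_of_nat_eq_top)
  next
    case False
    then obtain n where "h < of_nat n" using ennreal_Ex_less_of_nat top.not_eq_extremum by blast
    then have "min h (of_nat n) = h" by simp
    then show ?thesis by (metis SUP_upper UNIV_I)
  qed
qed

lemma nn_integral_prod_le_by_truncation:
  fixes F :: "'i \<Rightarrow> 'a \<Rightarrow> ennreal"
  assumes "finite T" and trunc: "\<And>n. (\<integral>\<^sup>+ m. (\<Prod>A\<in>T. min (F A m) (of_nat n)) \<partial>measure_pmf \<mu>) \<le> C"
  shows "(\<integral>\<^sup>+ m. (\<Prod>A\<in>T. F A m) \<partial>measure_pmf \<mu>) \<le> C"
proof -
  have inc: "incseq (\<lambda>n. min (F A m) (of_nat n))" for A m
    unfolding incseq_def by (intro allI impI min.mono) auto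
  have "(\<Prod>A\<in>T. F A m) = (SUP n. \<Prod>A\<in>T. min (F A m) (of_nat n))" for m
    using SUP_prod_incseq_ennreal[OF assms(1) inc] by (simp add: SUP_min_of_nat)
  then have "(\<integral>\<^sup>+ m. (\<Prod>A\<in>T. F A m) \<partial>\<mu>) = (\<integral>\<^sup>+ m. (SUP n. \<Prod>A\<in>T. min (F A m) (of_nat n)) \<partial>\<mu>)"
    by simp
  also have "\<dots> = (SUP n. \<integral>\<^sup>+ m. (\<Prod>A\<in>T. min (F A m) (of_nat n)) \<partial>\<mu>)"
  proof (rule nn_integral_monotone_convergence_SUP)
    show "incseq (\<lambda>n m. \<Prod>A\<in>T. min (F A m) (of_nat n))"
      unfolding incseq_def le_fun_def by (intro allI impI prod_mono_ennreal min.mono) auto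
  qed simp
  also have "\<dots> \<le> C" by (rule SUP_least) (rule trunc)
  finally show ?thesis .
qed

lemma PNA_family_ennreal:
  assumes pna: "PNA P \<mu>" and "finite P" "finite T"
    and disj: "disjoint_family_on k T" and blocks: "\<forall>A\<in>T. \<exists>F\<subseteq>P. k A = \<Union>F"
    and mono: "\<forall>A\<in>T. mono_Mem up (k A) (h A)"
  shows "expect_prod_le \<mu> T (\<lambda>A m. h A (m |` k A))"
  unfolding expect_prod_le_def
proof (rule nn_integral_prod_le_by_truncation[OF \<open>finite T\<close>])
  fix n
  define g where "g A c = enn2real (min (h A c) (of_nat n))" for A c
  have finite_min: "min z (of_nat n) < (top :: ennreal)" for z
    by (simp add: min.strict_coboundedI2 of_nat_less_top)
  have g_eq: "ennreal (g A c) = min (h A c) (of_nat n)" for A c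
    by (simp add: g_def finite_min)
  have "mono (\<lambda>z. enn2real (min z (of_nat n)))"
    by (rule monoI) (intro enn2real_mono min.mono order_refl finite_min)
  then have "expect_prod_le \<mu> T (\<lambda>A m. ennreal (g A (m |` k A)))"
    using mono unfolding g_def
    by (intro PNA_family[OF pna \<open>finite P\<close> \<open>finite T\<close> disj blocks]) (auto intro: mono_Mem_mono)
  then have "(\<integral>\<^sup>+ m. (\<Prod>A\<in>T. min (h A (m |` k A)) (of_nat n)) \<partial>\<mu>)
      \<le> (\<Prod>A\<in>T. \<integral>\<^sup>+ m. min (h A (m |` k A)) (of_nat n) \<partial>\<mu>)"
    by (simp add: expect_prod_le_def g_eq)
  also have "\<dots> \<le> (\<Prod>A\<in>T. \<integral>\<^sup>+ m. h A (m |` k A) \<partial>\<mu>)"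
    by (intro prod_mono_ennreal nn_integral_mono) simp
  finally show "(\<integral>\<^sup>+ m. (\<Prod>A\<in>T. min (h A (m |` k A)) (of_nat n)) \<partial>\<mu>)
      \<le> (\<Prod>A\<in>T. \<integral>\<^sup>+ m. h A (m |` k A) \<partial>\<mu>)" .
qed

text \<open>Each block \<open>C\<close> of a coarsening of the restricted partition is the trace on \<open>Y\<close> of the union
  \<open>lift C\<close> of the blocks of \<open>Q\<close> whose traces lie in \<open>C\<close>; these unions are disjoint, so the PNA
  inequality for \<open>Q\<close> applies to functions of \<open>m |` lift C\<close> that only look at \<open>C\<close>.\<close>
lemma PNA_restrict_blocks:
  assumes pna: "PNA Q \<mu>" and \<mu>: "\<mu> \<in> Xcar"
  shows "PNA (restrict_blocks Y Q) \<mu>"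
proof (rule PNA_I)
  have Q: "is_partition Q" by (rule PNA_partition[OF pna])
  show "is_partition (restrict_blocks Y Q)" by (rule partition_restrict_blocks[OF Q])
  show "\<Union>(restrict_blocks Y Q) \<subseteq> ddom \<mu>"
    using PNA_Union_subset[OF pna] by (auto simp: Union_restrict_blocks)
  show "expect_prod_le \<mu> T (\<lambda>A m. ennreal (f A (m |` A)))"
    if T: "is_partition T" and TQ: "coarsens T (restrict_blocks Y Q)"
      and nonneg: "\<forall>A\<in>T. \<forall>m\<in>Mem A. 0 \<le> f A m" and mono: "\<forall>A\<in>T. mono_Mem up A (f A)" for T f up
  proof -
    define lift where "lift C = \<Union>{B\<in>Q. B \<inter> Y \<noteq> {} \<and> B \<inter> Y \<subseteq> C}" for C
    have sub: "C \<subseteq> lift C" if "C \<in> T" for C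
    proof
      fix v assume "v \<in> C"
      obtain F where "F \<subseteq> restrict_blocks Y Q" "C = \<Union>F" using coarsensD[OF TQ \<open>C \<in> T\<close>] by blast
      then obtain B where "B \<in> Q" "B \<inter> Y \<noteq> {}" "v \<in> B" "B \<inter> Y \<subseteq> C"
        using \<open>v \<in> C\<close> by (auto simp: restrict_blocks_def)
      then show "v \<in> lift C" by (auto simp: lift_def)
    qed
    have "disjoint_family_on lift T"
      unfolding disjoint_family_on_def
    proof (intro ballI impI)
      fix C C' assume "C \<in> T" "C' \<in> T" "C \<noteq> C'"
      show "lift C \<inter> lift C' = {}"
      proof (rule ccontr)
        assume "lift C \<inter> lift C' \<noteq> {}"
        then obtain B B' v where "B \<in> Q" "B' \<in> Q" "v \<in> B" "v \<in> B'"
          and "B \<inter> Y \<noteq> {}" "B \<inter> Y \<subseteq> C" "B' \<inter> Y \<subseteq> C'"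
          by (auto simp: lift_def)
        have "B = B'" using partitionD[OF Q] \<open>B \<in> Q\<close> \<open>B' \<in> Q\<close> \<open>v \<in> B\<close> \<open>v \<in> B'\<close> .
        then have "B \<inter> Y \<subseteq> C \<inter> C'" using \<open>B \<inter> Y \<subseteq> C\<close> \<open>B' \<inter> Y \<subseteq> C'\<close> by simp
        then show False
          using \<open>B \<inter> Y \<noteq> {}\<close> partitionD[OF T \<open>C \<in> T\<close> \<open>C' \<in> T\<close>] \<open>C \<noteq> C'\<close> by blast
      qed
    qed
    moreover have "finite T"
      using finite_partition[OF T] coarsens_Union[OF TQ] PNA_Union_subset[OF pna] finite_ddom[OF \<mu>]
      by (metis Union_restrict_blocks finite_Int finite_subset)
    moreover have "\<exists>F\<subseteq>Q. lift C = \<Union>F" for C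
      by (rule exI[of _ "{B\<in>Q. B \<inter> Y \<noteq> {} \<and> B \<inter> Y \<subseteq> C}"]) (auto simp: lift_def)
    moreover have "mono_Mem up (lift C) (\<lambda>c. f C (c |` C))" if "C \<in> T" for C
      by (rule mono_Mem_comp[OF mono[rule_format, OF that]])
        (use sub[OF that] in \<open>auto intro: Mem_restrict mem_le_restrict\<close>)
    moreover have "0 \<le> f C (c |` C)" if "C \<in> T" "c \<in> Mem (lift C)" for C c
      using nonneg that Mem_restrict[OF that(2) sub[OF that(1)]] by blast
    ultimately have "expect_prod_le \<mu> T (\<lambda>C m. ennreal (f C (m |` lift C |` C)))"
      by (intro PNA_family[OF pna PNA_finite[OF pna \<mu>]]) auto
    then show ?thesis
      by (rule expect_prod_le_cong) (simp add: sub Int_absorb1)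
  qed
qed

text \<open>For a point mass \<open>\<rho>\<close> this is the inner step of the Fubini argument for independent products,
  for \<open>\<rho>\<close> the second factor it is the outer step.\<close>
lemma expect_prod_le_map_add:
  assumes pna: "PNA Q \<nu>" and \<nu>: "\<nu> \<in> Xcar" and "finite T" and T: "is_partition T"
    and blocks: "\<forall>A\<in>T. \<exists>F\<subseteq>Q. A \<inter> ddom \<nu> = \<Union>F"
    and cover: "\<And>a A. a \<in> set_pmf \<rho> \<Longrightarrow> A \<in> T \<Longrightarrow> A \<subseteq> dom a \<union> ddom \<nu>"
    and mono: "\<forall>A\<in>T. mono_Mem up A (f A)"
  shows "expect_prod_le \<nu> T (\<lambda>A c. \<integral>\<^sup>+ a. ennreal (f A ((a ++ c) |` A)) \<partial>\<rho>)"
proof -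
  have "mono_Mem up (A \<inter> ddom \<nu>) (\<lambda>c. \<integral>\<^sup>+ a. ennreal (f A ((a ++ c) |` A)) \<partial>\<rho>)" if "A \<in> T" for A
  proof (rule mono_Mem_nn_integral)
    fix a assume "a \<in> set_pmf \<rho>"
    have "mono_Mem up (A \<inter> ddom \<nu>) (\<lambda>c. f A ((a ++ c) |` A))"
      by (rule mono_Mem_comp[OF mono[rule_format, OF that]])
        (use cover[OF \<open>a \<in> set_pmf \<rho>\<close> that] in
          \<open>auto intro: Mem_map_add_restrict mem_le_map_add_restrict\<close>)
    then show "mono_Mem up (A \<inter> ddom \<nu>) (\<lambda>c. ennreal (f A ((a ++ c) |` A)))"
      by (rule mono_Mem_mono) (rule monoI, rule ennreal_leI)
  qed
  moreover have "disjoint_family_on (\<lambda>A. A \<inter> ddom \<nu>) T"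
    using partitionD[OF T] by (auto simp: disjoint_family_on_def)
  ultimately have "expect_prod_le \<nu> T
      (\<lambda>A c. \<integral>\<^sup>+ a. ennreal (f A ((a ++ c |` (A \<inter> ddom \<nu>)) |` A)) \<partial>\<rho>)"
    by (intro PNA_family_ennreal[OF pna PNA_finite[OF pna \<nu>] \<open>finite T\<close> _ blocks]) auto
  then show ?thesis
    by (rule expect_prod_le_cong)
      (simp add: restrict_map_add[symmetric] Dist_D[OF Xcar_Dist[OF \<nu>]])
qed

lemma expect_prod_le_indep_prod:
  assumes inner: "\<And>a. a \<in> set_pmf x \<Longrightarrow> expect_prod_le y T (\<lambda>A b. F A (a ++ b))"
    and outer: "expect_prod_le x T (\<lambda>A a. \<integral>\<^sup>+ b. F A (a ++ b) \<partial>y)"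
  shows "expect_prod_le (indep_prod x y) T F"
proof -
  have "(\<integral>\<^sup>+ m. (\<Prod>A\<in>T. F A m) \<partial>indep_prod x y) = (\<integral>\<^sup>+ a. \<integral>\<^sup>+ b. (\<Prod>A\<in>T. F A (a ++ b)) \<partial>y \<partial>x)"
    by (rule nn_integral_indep_prod)
  also have "\<dots> \<le> (\<integral>\<^sup>+ a. (\<Prod>A\<in>T. \<integral>\<^sup>+ b. F A (a ++ b) \<partial>y) \<partial>x)"
    using inner by (intro nn_integral_mono_pmf) (simp add: expect_prod_le_def)
  also have "\<dots> \<le> (\<Prod>A\<in>T. \<integral>\<^sup>+ a. \<integral>\<^sup>+ b. F A (a ++ b) \<partial>y \<partial>x)"
    using outer by (simp add: expect_prod_le_def)
  also have "\<dots> = (\<Prod>A\<in>T. \<integral>\<^sup>+ m. F A m \<partial>indep_prod x y)"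
    by (simp add: nn_integral_indep_prod)
  finally show ?thesis unfolding expect_prod_le_def .
qed

lemma PNA_indep_prod:
  assumes x: "x \<in> Xcar" and y: "y \<in> Xcar" and disj: "ddom x \<inter> ddom y = {}"
    and P: "PNA P x" and Q: "PNA Q y"
  shows "PNA (P \<union> Q) (indep_prod x y)"
proof (rule PNA_I)
  have PX: "\<Union>P \<subseteq> ddom x" and QY: "\<Union>Q \<subseteq> ddom y"
    using PNA_Union_subset[OF P] PNA_Union_subset[OF Q] .
  show "is_partition (P \<union> Q)"
    by (rule partition_Un[OF PNA_partition[OF P] PNA_partition[OF Q]]) (use PX QY disj in blast)
  show "\<Union>(P \<union> Q) \<subseteq> ddom (indep_prod x y)"
    using PX QY ddom_indep_prod[OF x y] by auto
  show "expect_prod_le (indep_prod x y) T (\<lambda>A m. ennreal (f A (m |` A)))"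
    if T: "is_partition T" and TPQ: "coarsens T (P \<union> Q)"
      and "\<forall>A\<in>T. \<forall>m\<in>Mem A. 0 \<le> f A m" and mono: "\<forall>A\<in>T. mono_Mem up A (f A)" for T f up
  proof (rule expect_prod_le_indep_prod)
    have cover: "\<Union>T \<subseteq> ddom x \<union> ddom y"
      using coarsens_Union[OF TPQ] PX QY by auto
    then have "finite T"
      using finite_partition[OF T] finite_ddom[OF x] finite_ddom[OF y]
      by (meson finite_UnI finite_subset)
    have blocks_x: "\<forall>A\<in>T. \<exists>F\<subseteq>P. A \<inter> ddom x = \<Union>F"
      using coarsens_Int_blocks[OF TPQ PX] QY disj by blast
    have blocks_y: "\<forall>A\<in>T. \<exists>F\<subseteq>Q. A \<inter> ddom y = \<Union>F"
      using coarsens_Int_blocks[of T Q P, OF _ QY] TPQ PX disj by (auto simp: Un_commute)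
    show "expect_prod_le y T (\<lambda>A b. ennreal (f A ((a ++ b) |` A)))" if "a \<in> set_pmf x" for a
      using expect_prod_le_map_add[OF Q y \<open>finite T\<close> T blocks_y _ mono, of "return_pmf a"]
        cover Dist_D[OF Xcar_Dist[OF x] that]
      by (auto simp: expect_prod_le_def)
    have "expect_prod_le x T (\<lambda>A a. \<integral>\<^sup>+ b. ennreal (f A ((b ++ a) |` A)) \<partial>y)"
      using expect_prod_le_map_add[OF P x \<open>finite T\<close> T blocks_x _ mono, of y]
        cover Dist_D[OF Xcar_Dist[OF y]] by blast
    then show "expect_prod_le x T (\<lambda>A a. \<integral>\<^sup>+ b. ennreal (f A ((a ++ b) |` A)) \<partial>y)"
    proof (rule expect_prod_le_cong)
      fix A a assume "a \<in> set_pmf x"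
      then have "b ++ a = a ++ b" if "b \<in> set_pmf y" for b
        using map_add_comm that disj Dist_D[OF Xcar_Dist[OF x]] Dist_D[OF Xcar_Dist[OF y]] by metis
      then show "(\<integral>\<^sup>+ b. ennreal (f A ((b ++ a) |` A)) \<partial>y)
          = (\<integral>\<^sup>+ b. ennreal (f A ((a ++ b) |` A)) \<partial>y)"
        by (intro nn_integral_cong_pmf) simp
    qed
  qed
qed

section \<open>The two frames\<close>

lemma BI_frame_XcarI:
  assumes closed: "\<And>x y. x \<in> Xcar \<Longrightarrow> y \<in> Xcar \<Longrightarrow> op x y \<subseteq> Xcar"
    and down_closed: "\<And>x y z x' y'. x \<in> Xcar \<Longrightarrow> y \<in> Xcar \<Longrightarrow> x' \<in> Xcar \<Longrightarrow> y' \<in> Xcar \<Longrightarrow>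
      z \<in> op x y \<Longrightarrow> dle x' x \<Longrightarrow> dle y' y \<Longrightarrow> \<exists>z'\<in>Xcar. dle z' z \<and> z' \<in> op x' y'"
    and commute: "\<And>x y z. x \<in> Xcar \<Longrightarrow> y \<in> Xcar \<Longrightarrow> z \<in> op x y \<Longrightarrow> z \<in> op y x"
    and assoc: "\<And>x y z t w. x \<in> Xcar \<Longrightarrow> y \<in> Xcar \<Longrightarrow> z \<in> Xcar \<Longrightarrow>
      w \<in> op t z \<Longrightarrow> t \<in> op x y \<Longrightarrow> \<exists>s\<in>Xcar. s \<in> op y z \<and> w \<in> op x s"
    and unit: "\<And>x. x \<in> Xcar \<Longrightarrow> x \<in> op (return_pmf Map.empty) x"
    and coherent: "\<And>e x y. e \<in> Xcar \<Longrightarrow> y \<in> Xcar \<Longrightarrow> x \<in> op y e \<Longrightarrow> dle y x"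
  shows "BI_frame Xcar dle op Xcar"
  unfolding BI_frame_def
proof (intro conjI ballI impI)
  fix x y z x' y' assume "x \<in> Xcar" "y \<in> Xcar" "z \<in> Xcar" "x' \<in> Xcar" "y' \<in> Xcar"
    "z \<in> op x y" "dle x' x" "dle y' y"
  then show "\<exists>z'\<in>Xcar. dle z' z \<and> z' \<in> op x' y'" by (intro down_closed)
next
  fix x y z t w assume "x \<in> Xcar" "y \<in> Xcar" "z \<in> Xcar" "t \<in> Xcar" "w \<in> Xcar"
    "w \<in> op t z" "t \<in> op x y"
  then show "\<exists>s\<in>Xcar. s \<in> op y z \<and> w \<in> op x s" by (intro assoc)
next
  fix x :: "('a \<rightharpoonup> real) pmf" assume "x \<in> Xcar"
  then show "\<exists>e\<in>Xcar. x \<in> op e x" using unit Xcar_return_empty by blast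
qed (use closed commute coherent dle_refl dle_trans in auto)

lemma tensor_commute: "tensor y x = tensor x y"
  unfolding tensor_def by (simp only: Int_commute Un_commute mult.commute)

lemma tensor_unit:
  assumes "x \<in> Xcar"
  shows "x \<in> tensor (return_pmf Map.empty) x"
  using tensor_iff[OF Xcar_return_empty assms]
  by (simp add: ddom_return_empty indep_prod_return_empty_left)

lemma tensor_down_closed:
  assumes xy: "x \<in> Xcar" "y \<in> Xcar" and xy': "x' \<in> Xcar" "y' \<in> Xcar"
    and "z \<in> tensor x y" "dle x' x" "dle y' y"
  shows "indep_prod x' y' \<in> tensor x' y'" "dle (indep_prod x' y') z"
proof -
  have disj: "ddom x \<inter> ddom y = {}" and z: "z = indep_prod x y"
    using tensor_iff[OF xy] \<open>z \<in> tensor x y\<close> by auto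
  have sub: "ddom x' \<subseteq> ddom x" "ddom y' \<subseteq> ddom y"
    and marg: "marg (ddom x') x = x'" "marg (ddom y') y = y'"
    using \<open>dle x' x\<close> \<open>dle y' y\<close> by (auto simp: dle_def)
  show "indep_prod x' y' \<in> tensor x' y'"
    using tensor_iff[OF xy'] disj sub by blast
  have "marg (ddom x' \<union> ddom y') z = indep_prod x' y'"
    using marg_indep_prod[OF Xcar_Dist Xcar_Dist, OF xy disj sub] marg z by simp
  then show "dle (indep_prod x' y') z"
    using sub by (auto simp: dle_def z ddom_indep_prod xy xy')
qed

lemma tensor_assoc:
  assumes xyz: "x \<in> Xcar" "y \<in> Xcar" "z \<in> Xcar" and "t \<in> tensor x y" "w \<in> tensor t z"
  shows "indep_prod y z \<in> tensor y z" "w \<in> tensor x (indep_prod y z)"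
proof -
  have t: "ddom x \<inter> ddom y = {}" "t = indep_prod x y"
    using tensor_iff[OF xyz(1,2)] \<open>t \<in> tensor x y\<close> by auto
  then have "t \<in> Xcar" "ddom t = ddom x \<union> ddom y"
    using indep_prod_Xcar[OF xyz(1,2)] ddom_indep_prod[OF xyz(1,2)] by simp_all
  then have w: "ddom t \<inter> ddom z = {}" "w = indep_prod t z"
    using tensor_iff[OF _ xyz(3)] \<open>w \<in> tensor t z\<close> by auto
  have disj: "ddom y \<inter> ddom z = {}" "ddom x \<inter> ddom (indep_prod y z) = {}"
    using t(1) w(1) \<open>ddom t = ddom x \<union> ddom y\<close> ddom_indep_prod[OF xyz(2,3)] by auto
  show "indep_prod y z \<in> tensor y z"
    using tensor_iff[OF xyz(2,3)] disj(1) by simp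
  show "w \<in> tensor x (indep_prod y z)"
    using tensor_iff[OF xyz(1) indep_prod_Xcar[OF xyz(2,3)]] disj(2) t(2) w(2)
    by (simp add: indep_prod_assoc)
qed

lemma tensor_frame: "BI_frame Xcar dle tensor Xcar"
proof (rule BI_frame_XcarI)
  show "tensor x y \<subseteq> Xcar" if "x \<in> Xcar" "y \<in> Xcar" for x y
    by (auto simp: tensor_iff[OF that] indep_prod_Xcar[OF that])
  show "\<exists>z'\<in>Xcar. dle z' z \<and> z' \<in> tensor x' y'"
    if "x \<in> Xcar" "y \<in> Xcar" "x' \<in> Xcar" "y' \<in> Xcar" "z \<in> tensor x y" "dle x' x" "dle y' y"
    for x y z x' y'
    using tensor_down_closed[OF that] indep_prod_Xcar[OF that(3,4)] by blast
  show "z \<in> tensor y x" if "z \<in> tensor x y" for x y z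
    using that by (simp add: tensor_commute)
  show "\<exists>s\<in>Xcar. s \<in> tensor y z \<and> w \<in> tensor x s"
    if "x \<in> Xcar" "y \<in> Xcar" "z \<in> Xcar" "w \<in> tensor t z" "t \<in> tensor x y" for x y z t w
    using tensor_assoc[OF that(1-3,5,4)] indep_prod_Xcar[OF that(2,3)] by blast
  show "x \<in> tensor (return_pmf Map.empty) x" if "x \<in> Xcar" for x
    using that by (rule tensor_unit)
  show "dle y x" if "e \<in> Xcar" "y \<in> Xcar" "x \<in> tensor y e" for e x y
  proof -
    have "ddom y \<inter> ddom e = {}" "x = indep_prod y e"
      using tensor_iff[OF that(2,1)] that(3) by auto
    then show ?thesis
      using marg_indep_prod_left[OF Xcar_Dist Xcar_Dist, OF that(2,1)] ddom_indep_prod[OF that(2,1)]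
      by (simp add: dle_def)
  qed
qed

lemma noplus_iff:
  "z \<in> noplus x y \<longleftrightarrow> ddom x \<inter> ddom y = {} \<and> z \<in> Dist (ddom x \<union> ddom y) \<and>
     marg (ddom x) z = x \<and> marg (ddom y) z = y \<and> (\<forall>P Q. PNA P x \<longrightarrow> PNA Q y \<longrightarrow> PNA (P \<union> Q) z)"
proof -
  have "(\<forall>P Q. is_partition P \<and> \<Union>P \<subseteq> ddom x \<and> is_partition Q \<and> \<Union>Q \<subseteq> ddom y \<and> PNA P x \<and> PNA Q y
           \<longrightarrow> PNA (P \<union> Q) z) \<longleftrightarrow> (\<forall>P Q. PNA P x \<longrightarrow> PNA Q y \<longrightarrow> PNA (P \<union> Q) z)"
    by (meson PNA_partition PNA_Union_subset)
  then show ?thesis unfolding noplus_def by simp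
qed

lemma ddom_noplus: "z \<in> noplus x y \<Longrightarrow> ddom z = ddom x \<union> ddom y"
  by (simp add: noplus_iff ddom_Dist)

lemma noplus_Xcar: "x \<in> Xcar \<Longrightarrow> y \<in> Xcar \<Longrightarrow> z \<in> noplus x y \<Longrightarrow> z \<in> Xcar"
  by (meson XcarI finite_UnI finite_ddom noplus_iff)

lemma tensor_subset_noplus:
  assumes x: "x \<in> Xcar" and y: "y \<in> Xcar"
  shows "tensor x y \<subseteq> noplus x y"
proof
  fix z assume "z \<in> tensor x y"
  then have disj: "ddom x \<inter> ddom y = {}" and z: "z = indep_prod x y"
    using tensor_iff[OF x y] by auto
  show "z \<in> noplus x y"
    unfolding noplus_iff z
    using disj indep_prod_Dist[OF Xcar_Dist Xcar_Dist, OF x y]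
      marg_indep_prod_left[OF Xcar_Dist Xcar_Dist, OF x y disj]
      marg_indep_prod_right[OF Xcar_Dist Xcar_Dist, OF x y disj]
      PNA_indep_prod[OF x y disj] by blast
qed

lemma noplus_down_closed:
  assumes x: "x \<in> Xcar" and y: "y \<in> Xcar" and z: "z \<in> noplus x y"
    and "dle x' x" "dle y' y"
  shows "marg (ddom x' \<union> ddom y') z \<in> noplus x' y'"
proof -
  let ?D = "ddom x' \<union> ddom y'"
  have sub: "ddom x' \<subseteq> ddom x" "ddom y' \<subseteq> ddom y"
    and marg: "marg (ddom x') x = x'" "marg (ddom y') y = y'"
    using \<open>dle x' x\<close> \<open>dle y' y\<close> by (auto simp: dle_def)
  have "z \<in> Xcar" using noplus_Xcar[OF x y z] .
  have D: "?D \<subseteq> ddom z" using ddom_noplus[OF z] sub by auto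
  have "marg (ddom x) z = x" "marg (ddom y) z = y" using z by (simp_all add: noplus_iff)
  then have "marg (ddom x') (marg ?D z) = x'" "marg (ddom y') (marg ?D z) = y'"
    using marg_marg_subset[OF sub(1), of z] marg_marg_subset[OF sub(2), of z] marg
    by (simp_all add: marg_marg_subset)
  moreover have "PNA (P \<union> Q) (marg ?D z)" if "PNA P x'" "PNA Q y'" for P Q
  proof -
    have "\<Union>P \<subseteq> ddom x'" "\<Union>Q \<subseteq> ddom y'" using PNA_Union_subset that by auto
    then have "PNA P x" "PNA Q y"
      using PNA_marg_iff[OF x sub(1), of P] PNA_marg_iff[OF y sub(2), of Q] that marg by auto
    then have "PNA (P \<union> Q) z" using z by (simp add: noplus_iff)
    then show ?thesis
      using PNA_marg_iff[OF \<open>z \<in> Xcar\<close> D, of "P \<union> Q"] \<open>\<Union>P \<subseteq> ddom x'\<close> \<open>\<Union>Q \<subseteq> ddom y'\<close> by auto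
  qed
  moreover have "marg ?D z \<in> Dist ?D"
    using marg_Dist[OF Xcar_Dist[OF \<open>z \<in> Xcar\<close>], of ?D] D by (simp add: Int_absorb1)
  moreover have "ddom x' \<inter> ddom y' = {}" using z sub by (auto simp: noplus_iff)
  ultimately show ?thesis by (simp add: noplus_iff)
qed

lemma noplus_commute: "noplus y x = noplus x y"
  unfolding set_eq_iff noplus_iff by (metis Un_commute inf_commute)

lemma noplus_noplus:
  assumes x: "x \<in> Xcar" and y: "y \<in> Xcar" and z: "z \<in> Xcar"
    and t: "t \<in> noplus x y" and w: "w \<in> noplus t z"
  shows "w \<in> Xcar" "ddom w = ddom x \<union> ddom y \<union> ddom z"
    "ddom x \<inter> ddom y = {}" "ddom x \<inter> ddom z = {}" "ddom y \<inter> ddom z = {}"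
    "marg (ddom x) w = x" "marg (ddom y) w = y" "marg (ddom z) w = z"
    "PNA P x \<Longrightarrow> PNA Q y \<Longrightarrow> PNA R z \<Longrightarrow> PNA (P \<union> Q \<union> R) w"
proof -
  have "t \<in> Xcar" using noplus_Xcar[OF x y t] .
  then show "w \<in> Xcar" using noplus_Xcar[OF _ z w] by blast
  have dt: "ddom t = ddom x \<union> ddom y" using ddom_noplus[OF t] .
  then show "ddom w = ddom x \<union> ddom y \<union> ddom z" using ddom_noplus[OF w] by simp
  show "ddom x \<inter> ddom y = {}" "ddom x \<inter> ddom z = {}" "ddom y \<inter> ddom z = {}"
    using t w dt by (auto simp: noplus_iff)
  have "marg (ddom t) w = t" "marg (ddom x) t = x" "marg (ddom y) t = y"
    using t w by (simp_all add: noplus_iff)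
  then show "marg (ddom x) w = x" "marg (ddom y) w = y"
    using marg_marg_subset[of "ddom x" "ddom t" w] marg_marg_subset[of "ddom y" "ddom t" w] dt
    by auto
  show "marg (ddom z) w = z" using w by (simp add: noplus_iff)
  show "PNA (P \<union> Q \<union> R) w" if "PNA P x" "PNA Q y" "PNA R z"
    using that t w by (simp add: noplus_iff)
qed

lemma noplus_assoc_right:
  assumes "x \<in> Xcar" "y \<in> Xcar" "z \<in> Xcar" "t \<in> noplus x y" "w \<in> noplus t z"
  shows "marg (ddom y \<union> ddom z) w \<in> noplus y z"
proof -
  note w = noplus_noplus[OF assms]
  have D: "ddom y \<union> ddom z \<subseteq> ddom w" using w(2) by auto
  have "PNA (P \<union> Q) (marg (ddom y \<union> ddom z) w)" if "PNA P y" "PNA Q z" for P Q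
  proof -
    have "PNA ({} \<union> P \<union> Q) w" using w(9)[OF PNA_empty that] .
    moreover have "\<Union>(P \<union> Q) \<subseteq> ddom y \<union> ddom z"
      using PNA_Union_subset[OF that(1)] PNA_Union_subset[OF that(2)] by auto
    ultimately show ?thesis using PNA_marg_iff[OF w(1) D] by simp
  qed
  moreover have "marg (ddom y \<union> ddom z) w \<in> Dist (ddom y \<union> ddom z)"
    using marg_Dist[OF Xcar_Dist[OF w(1)]] D by (metis Int_absorb1)
  ultimately show ?thesis
    using w(5,7,8) by (simp add: noplus_iff marg_marg_subset)
qed

text \<open>Given \<open>PNA Q\<close> for the marginal on \<open>ddom y \<union> ddom z\<close>, the traces of \<open>Q\<close> on \<open>ddom y\<close> and on
  \<open>ddom z\<close> are PNA for \<open>y\<close> and \<open>z\<close>; joining them with \<open>P\<close> gives a refinement of \<open>P \<union> Q\<close>.\<close>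
lemma noplus_assoc_left:
  assumes "x \<in> Xcar" "y \<in> Xcar" "z \<in> Xcar" "t \<in> noplus x y" "w \<in> noplus t z"
  shows "w \<in> noplus x (marg (ddom y \<union> ddom z) w)"
proof -
  note w = noplus_noplus[OF assms]
  let ?s = "marg (ddom y \<union> ddom z) w"
  have D: "ddom y \<union> ddom z \<subseteq> ddom w" using w(2) by auto
  have ddom_s: "ddom ?s = ddom y \<union> ddom z" using ddom_marg[OF w(1)] D by blast
  have "PNA (P \<union> Q) w" if P: "PNA P x" and Q: "PNA Q ?s" for P Q
  proof -
    have QYZ: "\<Union>Q \<subseteq> ddom y \<union> ddom z" using PNA_Union_subset[OF Q] ddom_s by simp
    then have "PNA Q w" using Q PNA_marg_iff[OF w(1) D] by simp
    then have "PNA (restrict_blocks (ddom y) Q) w" "PNA (restrict_blocks (ddom z) Q) w"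
      using PNA_restrict_blocks w(1) by blast+
    moreover have "ddom y \<subseteq> ddom w" "ddom z \<subseteq> ddom w" using w(2) by auto
    ultimately have "PNA (restrict_blocks (ddom y) Q) y" "PNA (restrict_blocks (ddom z) Q) z"
      using PNA_marg_iff[OF w(1), of "ddom y" "restrict_blocks (ddom y) Q"]
        PNA_marg_iff[OF w(1), of "ddom z" "restrict_blocks (ddom z) Q"] w(7,8)
      by (simp_all add: Union_restrict_blocks)
    then have "PNA (P \<union> restrict_blocks (ddom y) Q \<union> restrict_blocks (ddom z) Q) w"
      using w(9)[OF P] by blast
    moreover have "is_partition (P \<union> Q)"
      using partition_Un[OF PNA_partition[OF P] PNA_partition[OF Q]]
        PNA_Union_subset[OF P] QYZ w(4,3) by blast
    ultimately show ?thesis using PNA_coarsen coarsens_restrict_blocks[OF QYZ] by blast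
  qed
  moreover have "w \<in> Dist (ddom x \<union> ddom ?s)"
    using Xcar_Dist[OF w(1)] w(2) ddom_s by (simp add: Un_assoc)
  moreover have "ddom x \<inter> ddom ?s = {}" using w(3,4) ddom_s by auto
  ultimately show ?thesis
    using w(6) ddom_s by (simp add: noplus_iff)
qed

lemma noplus_frame: "BI_frame Xcar dle noplus Xcar"
proof (rule BI_frame_XcarI)
  show "noplus x y \<subseteq> Xcar" if "x \<in> Xcar" "y \<in> Xcar" for x y
    using noplus_Xcar[OF that] by blast
  show "\<exists>z'\<in>Xcar. dle z' z \<and> z' \<in> noplus x' y'"
    if "x \<in> Xcar" "y \<in> Xcar" "x' \<in> Xcar" "y' \<in> Xcar" "z \<in> noplus x y" "dle x' x" "dle y' y"
    for x y z x' y'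
  proof -
    have "z \<in> Xcar" using noplus_Xcar[OF that(1,2,5)] .
    moreover have "ddom x' \<union> ddom y' \<subseteq> ddom z"
      using ddom_noplus[OF that(5)] that(6,7) by (auto simp: dle_def)
    ultimately show ?thesis
      using dle_marg marg_Xcar noplus_down_closed[OF that(1,2,5,6,7)] by blast
  qed
  show "z \<in> noplus y x" if "z \<in> noplus x y" for x y z
    using that by (simp add: noplus_commute)
  show "\<exists>s\<in>Xcar. s \<in> noplus y z \<and> w \<in> noplus x s"
    if "x \<in> Xcar" "y \<in> Xcar" "z \<in> Xcar" "w \<in> noplus t z" "t \<in> noplus x y" for x y z t w
    using noplus_assoc_right[OF that(1-3,5,4)] noplus_assoc_left[OF that(1-3,5,4)]
      marg_Xcar[OF noplus_noplus(1)[OF that(1-3,5,4)]] by blast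
  show "x \<in> noplus (return_pmf Map.empty) x" if "x \<in> Xcar" for x
    using tensor_unit[OF that] tensor_subset_noplus[OF Xcar_return_empty that] by blast
  show "dle y x" if "e \<in> Xcar" "y \<in> Xcar" "x \<in> noplus y e" for e x y
    using that(3) by (auto simp: noplus_iff dle_def ddom_Dist)
qed

theorem mainTheorem9:
  shows "M_BI_frame {1::nat, 2} (\<le>) (Xcar :: ('v \<rightharpoonup> real) pmf set) dle
           (\<lambda>i. if i = 1 then tensor else noplus) (\<lambda>i. Xcar)"
  unfolding M_BI_frame_def using tensor_frame noplus_frame tensor_subset_noplus by auto

end
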